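(* Let $f:\mathbb{R}^n\to\mathbb{R}^n$ be continuous and $\mu\ge0$. Suppose that: (i) for every $x\in\mathbb{R}^n$, $f$ admits a strict $\mu$-estimator at $x$ of the form $\widetilde h_x(t)=f(x)+h_x(t-x)$ with $h_x:\mathbb{R}^n\to\mathbb{R}^n$; (ii) for every $x\in\mathbb{R}^n$ and every $w\in\mathbb{R}^n$, $\langle w,h_x\rangle\in\mathrm{DCH}(\mathbb{R}^n)$; (iii) for every $x\in\mathbb{R}^n$, $h_x$ satisfies condition (C) around $0$; (iv) $\flat_f:=\inf_{x\in\mathbb{R}^n}\operatorname{dist}\big(0,D^{\star}h_x(0)(S)\big)>\mu$, where $S$ is the unit sphere of $\mathbb{R}^n$; (v) for every $x\in\mathbb{R}^n$, $h_x$ is metrically injective around $0$ with $\operatorname{inj}(h_x,0)>\mu$. Then $f$ is a bijection of $\mathbb{R}^n$ onto $\mathbb{R}^n$ and $f^{-1}$ is Lipschitz continuous on $\mathbb{R}^n$ with constant $(\flat_f-\mu)^{-1}$.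
   Context: $\operatorname{lip}(g,\bar x)$ is the infimum of all $\ell>0$ such that $\|g(x_1)-g(x_2)\|\le\ell\|x_1-x_2\|$ on some neighbourhood of $\bar x$ ($+\infty$ if none). $h$ is a strict $\mu$-estimator of $f$ at $\bar x$ if $h(\bar x)=f(\bar x)$ and $\operatorname{lip}(f-h,\bar x)\le\mu$. $\mathrm{Sub}(\mathbb{R}^n)$ is the cone of sublinear (positively homogeneous convex real-valued) functions on $\mathbb{R}^n$, $\mathrm{DCH}(\mathbb{R}^n)=\mathrm{Sub}(\mathbb{R}^n)-\mathrm{Sub}(\mathbb{R}^n)$. The star-difference of convex compact (or empty) sets is $A\stackrel{*}{-}B=\{x: x+B\subseteq A\}$. A mapping $g:\mathbb{R}^n\to\mathbb{R}^m$ is scalarly quasidifferentiable at $x$ if for each $w\in\mathbb{R}^m$, $\langle w,g\rangle$ is directionally differentiable at $x$ in every direction and there exist $p_w,q_w\in\mathrm{Sub}(\mathbb{R}^n)$ with $\langle w,g\rangle'(x;v)=p_w(v)-q_w(v)$ for all $v$; its star-coquasiderivative is $D^{\star}g(x)(w)=\partial p_w(0)\stackrel{*}{-}\partial q_w(0)$ (convex subdifferentials; independent of the chosen pair), and $D^{\star}g(x)(A)=\bigcup_{w\in A}D^{\star}g(x)(w)$. $g$ satisfies condition (C) around $\bar x$ if $g$ is scalarly quasidifferentiable near $\bar x$ and $x\mapsto D^{\star}g(x)(S_m)$ ($S_m$ the unit sphere of $\mathbb{R}^m$) is upper semicontinuous at $\bar x$: for every open $O\supseteq D^{\star}g(\bar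 x)(S_m)$ there is $\delta>0$ with $D^{\star}g(x)(S_m)\subseteq O$ whenever $\|x-\bar x\|\le\delta$. $\operatorname{dist}(0,\emptyset)=+\infty$. $g$ is metrically injective around $\bar x$ if there exist $\beta,\delta>0$ with $\|g(x_1)-g(x_2)\|\ge\beta\|x_1-x_2\|$ for all $x_1,x_2$ within distance $\delta$ of $\bar x$; $\operatorname{inj}(g,\bar x)$ is the supremum of such $\beta$. *)

theory Defs
  imports "HOL-Analysis.Analysis" "HOL-Library.Extended_Real"
begin

text \<open>Lipschitz modulus lip(g, xbar) as an extended real (+infinity if no constant works).\<close>
definition lip :: "('a::real_normed_vector \<Rightarrow> 'b::real_normed_vector) \<Rightarrow> 'a \<Rightarrow> ereal" where
  "lip g xb = Inf (ereal ` {l. l > 0 \<and> (\<exists>\<delta>>0. \<forall>x1\<in>ball xb \<delta>. \<forall>x2\<in>ball xb \<delta>.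
        norm (g x1 - g x2) \<le> l * norm (x1 - x2))})"

definition strict_estimator :: "('a::real_normed_vector \<Rightarrow> 'b::real_normed_vector) \<Rightarrow> ('a \<Rightarrow> 'b) \<Rightarrow> 'a \<Rightarrow> real \<Rightarrow> bool" where
  "strict_estimator h f xb \<mu> \<longleftrightarrow> h xb = f xb \<and> lip (\<lambda>t. f t - h t) xb \<le> ereal \<mu>"

definition sublinear :: "('a::real_vector \<Rightarrow> real) \<Rightarrow> bool" where
  "sublinear p \<longleftrightarrow> convex_on UNIV p \<and> (\<forall>t>0. \<forall>v. p (t *\<^sub>R v) = t * p v)"

definition DCH :: "('a::real_vector \<Rightarrow> real) set" where
  "DCH = {\<phi>. \<exists>p q. sublinear p \<and> sublinear q \<and> \<phi> = (\<lambda>v. p v - q v)}"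

definition star_diff :: "'a::real_vector set \<Rightarrow> 'a set \<Rightarrow> 'a set" where
  "star_diff A B = {x. (\<lambda>b. x + b) ` B \<subseteq> A}"

definition subdiff :: "('a::real_inner \<Rightarrow> real) \<Rightarrow> 'a \<Rightarrow> 'a set" where
  "subdiff \<phi> x = {s. \<forall>y. \<phi> y \<ge> \<phi> x + s \<bullet> (y - x)}"

definition qd_pair :: "('a::euclidean_space \<Rightarrow> 'b::euclidean_space) \<Rightarrow> 'a \<Rightarrow> 'b \<Rightarrow> ('a \<Rightarrow> real) \<Rightarrow> ('a \<Rightarrow> real) \<Rightarrow> bool" where
  "qd_pair g x w p q \<longleftrightarrow> sublinear p \<and> sublinear q \<and>
     (\<forall>v. ((\<lambda>t. (w \<bullet> g (x + t *\<^sub>R v) - w \<bullet> g x) / t) \<longlongrightarrow> p v - q v) (at_right 0))"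

definition scalarly_qd :: "('a::euclidean_space \<Rightarrow> 'b::euclidean_space) \<Rightarrow> 'a \<Rightarrow> bool" where
  "scalarly_qd g x \<longleftrightarrow> (\<forall>w. \<exists>p q. qd_pair g x w p q)"

text \<open>Star-coquasiderivative D*g(x)(w) (independent of the chosen pair).\<close>
definition star_coqd :: "('a::euclidean_space \<Rightarrow> 'b::euclidean_space) \<Rightarrow> 'a \<Rightarrow> 'b \<Rightarrow> 'a set" where
  "star_coqd g x w = (let pq = (SOME pq. qd_pair g x w (fst pq) (snd pq))
      in star_diff (subdiff (fst pq) 0) (subdiff (snd pq) 0))"

definition star_coqd_set :: "('a::euclidean_space \<Rightarrow> 'b::euclidean_space) \<Rightarrow> 'a \<Rightarrow> 'b set \<Rightarrow> 'a set" where
  "star_coqd_set g x A = (\<Union>w\<in>A. star_coqd g x w)"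

definition condC :: "('a::euclidean_space \<Rightarrow> 'b::euclidean_space) \<Rightarrow> 'a \<Rightarrow> bool" where
  "condC g xb \<longleftrightarrow> (\<exists>\<delta>>0. \<forall>x\<in>ball xb \<delta>. scalarly_qd g x) \<and>
     (\<forall>U. open U \<and> star_coqd_set g xb (sphere 0 1) \<subseteq> U \<longrightarrow>
        (\<exists>\<delta>>0. \<forall>x. norm (x - xb) \<le> \<delta> \<longrightarrow> star_coqd_set g x (sphere 0 1) \<subseteq> U))"

definition dist0 :: "'a::real_normed_vector set \<Rightarrow> ereal" where
  "dist0 A = (if A = {} then \<infinity> else ereal (infdist 0 A))"

definition metric_inj_consts :: "('a::real_normed_vector \<Rightarrow> 'b::real_normed_vector) \<Rightarrow> 'a \<Rightarrow> real set" where
  "metric_inj_consts g xb = {\<beta>. \<beta> > 0 \<and> (\<exists>\<delta>>0. \<forall>x1 x2. dist x1 xb \<le> \<delta> \<and> dist x2 xb \<le> \<delta> \<longrightarrow>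
        norm (g x1 - g x2) \<ge> \<beta> * norm (x1 - x2))}"

definition metrically_injective :: "('a::real_normed_vector \<Rightarrow> 'b::real_normed_vector) \<Rightarrow> 'a \<Rightarrow> bool" where
  "metrically_injective g xb \<longleftrightarrow> metric_inj_consts g xb \<noteq> {}"

definition inj_mod :: "('a::real_normed_vector \<Rightarrow> 'b::real_normed_vector) \<Rightarrow> 'a \<Rightarrow> ereal" where
  "inj_mod g xb = Sup (ereal ` metric_inj_consts g xb)"

end

theory Submission
  imports Defs
begin

text \<open>Near each point \<open>x\<close>, \<open>f\<close> differs from the estimator \<open>t \<mapsto> f x + h x (t - x)\<close> by a map of
  Lipschitz modulus at most \<open>\<mu>\<close>, while \<open>h x\<close> expands distances near \<open>0\<close> by every factor
  \<open>c < \<flat>\<^sub>f\<close>. The latter is an Ekeland-type argument: a minimizer \<open>y\<close> of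
  \<open>norm (h z - u) + c * norm (z - a)\<close> with \<open>h y \<noteq> u\<close> would, through the first-order condition in the
  direction \<open>sgn (h y - u)\<close>, produce an element of \<open>D\<^sup>\<star>h(y)(S)\<close> of norm \<open>< c\<close>, which
  condition (C) excludes; so \<open>h y = u\<close>, and local injectivity identifies \<open>y\<close>. Hence \<open>f\<close> expands
  distances on small balls by every \<open>\<kappa> < \<flat>\<^sub>f - \<mu>\<close>.

  A continuous self-map of \<open>\<real>\<^sup>n\<close> which is locally \<open>\<kappa>\<close>-expanding is a bijection with
  \<open>1/\<kappa>\<close>-Lipschitz inverse: by invariance of domain it maps small balls onto balls, so every
  segment of the target lifts through \<open>f\<close>, the endpoint of the lift depends \<open>1/\<kappa>\<close>-Lipschitz on
  the endpoint of the segment, and this endpoint map inverts \<open>f\<close>. Letting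
  \<open>\<kappa> \<rightarrow> \<flat>\<^sub>f - \<mu>\<close> gives the constant.\<close>

section \<open>Locally expanding maps are Lipschitz homeomorphisms\<close>

definition expanding_on :: "'a::real_normed_vector set \<Rightarrow> ('a \<Rightarrow> 'b::real_normed_vector) \<Rightarrow> real \<Rightarrow> bool" where
  "expanding_on S f \<kappa> \<longleftrightarrow> (\<forall>s\<in>S. \<forall>t\<in>S. \<kappa> * norm (s - t) \<le> norm (f s - f t))"

definition locally_expanding :: "('a::real_normed_vector \<Rightarrow> 'b::real_normed_vector) \<Rightarrow> real \<Rightarrow> bool" where
  "locally_expanding f \<kappa> \<longleftrightarrow> (\<forall>x. \<exists>\<delta>>0. expanding_on (ball x \<delta>) f \<kappa>)"

lemma expanding_onD:
  "expanding_on S f \<kappa> \<Longrightarrow> s \<in> S \<Longrightarrow> t \<in> S \<Longrightarrow> \<kappa> * norm (s - t) \<le> norm (f s - f t)"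
  unfolding expanding_on_def by blast

lemma expanding_on_subset: "expanding_on S f \<kappa> \<Longrightarrow> T \<subseteq> S \<Longrightarrow> expanding_on T f \<kappa>"
  unfolding expanding_on_def by blast

lemma expanding_on_eqD:
  assumes "expanding_on S f \<kappa>" "\<kappa> > 0" "s \<in> S" "t \<in> S" "f s = f t"
  shows "s = t"
  using expanding_onD[OF assms(1,3,4)] assms(2,5) by (simp add: mult_le_0_iff)

lemma locally_expanding_uniform:
  assumes "locally_expanding f \<kappa>" "compact K"
  obtains \<delta> where "\<delta> > 0" "\<And>z. z \<in> K \<Longrightarrow> expanding_on (ball z \<delta>) f \<kappa>"
proof -
  obtain d where d: "\<And>x. d x > 0" "\<And>x. expanding_on (ball x (d x)) f \<kappa>"
    using assms(1) unfolding locally_expanding_def by metis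
  have "K \<subseteq> \<Union>(range (\<lambda>x. ball x (d x)))"
    using d(1) by (metis (no_types, lifting) UNIV_I UN_I centre_in_ball subsetI)
  then obtain \<delta> where \<delta>: "\<delta> > 0" "\<And>z. z \<in> K \<Longrightarrow> \<exists>B \<in> range (\<lambda>x. ball x (d x)). ball z \<delta> \<subseteq> B"
    using Heine_Borel_lemma[OF assms(2)] by blast
  show thesis
  proof (rule that[OF \<delta>(1)])
    fix z assume "z \<in> K"
    then obtain x where "ball z \<delta> \<subseteq> ball x (d x)" using \<delta>(2) by blast
    then show "expanding_on (ball z \<delta>) f \<kappa>" using d(2) expanding_on_subset by blast
  qed
qed

text \<open>By invariance of domain the image of the open ball is open; expansion keeps the image of the
  boundary sphere outside \<open>ball (f z) (\<kappa> * r)\<close>, so the image is also relatively closed in this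
  connected ball.\<close>

lemma ball_subset_image_if_expanding:
  fixes f :: "'a::euclidean_space \<Rightarrow> 'a"
  assumes contf: "continuous_on UNIV f" and k: "\<kappa> > 0" and r: "r > 0"
    and exp: "expanding_on (cball z r) f \<kappa>"
  shows "ball (f z) (\<kappa> * r) \<subseteq> f ` ball z r"
proof -
  have "inj_on f (ball z r)"
    using expanding_on_eqD[OF exp k] by (intro inj_onI) auto
  then have op: "open (f ` ball z r)"
    using invariance_of_domain[OF continuous_on_subset[OF contf] open_ball] by blast
  define B where "B = ball (f z) (\<kappa> * r)"
  define T where "T = B \<inter> f ` ball z r"
  have T_cball: "T = B \<inter> f ` cball z r"
  proof
    show "B \<inter> f ` cball z r \<subseteq> T"
    proof
      fix v assume v: "v \<in> B \<inter> f ` cball z r"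
      then obtain w where w: "w \<in> cball z r" "v = f w" by auto
      have "w \<in> ball z r"
      proof (rule ccontr)
        assume "w \<notin> ball z r"
        then have "norm (w - z) = r" using w by (auto simp: dist_norm norm_minus_commute)
        moreover have "\<kappa> * norm (w - z) \<le> norm (f w - f z)"
          using expanding_onD[OF exp w(1)] r by simp
        moreover have "norm (f w - f z) < \<kappa> * r"
          using v w unfolding B_def by (auto simp: dist_norm norm_minus_commute)
        ultimately show False by simp
      qed
      then show "v \<in> T" using v w unfolding T_def by auto
    qed
  qed (auto simp: T_def)
  have "openin (top_of_set B) T"
    unfolding T_def using op by (simp add: openin_open_Int)
  moreover have "closedin (top_of_set B) T"
    unfolding T_cball
    by (intro closedin_closed_Int compact_imp_closed compact_continuous_image
        continuous_on_subset[OF contf]) auto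
  moreover have "f z \<in> T" "connected B"
    unfolding T_def B_def using r k by auto
  ultimately have "T = B" using connected_clopen by blast
  then show ?thesis unfolding T_def B_def by auto
qed

lemma expanding_local_inverse:
  fixes f :: "'a::euclidean_space \<Rightarrow> 'a"
  assumes contf: "continuous_on UNIV f" and k: "\<kappa> > 0" and r: "r > 0"
    and exp: "expanding_on (cball z r) f \<kappa>"
  obtains \<phi> where "\<And>v. v \<in> ball (f z) (\<kappa> * r) \<Longrightarrow> \<phi> v \<in> ball z r \<and> f (\<phi> v) = v"
    and "\<And>v w. v \<in> ball (f z) (\<kappa> * r) \<Longrightarrow> w \<in> ball (f z) (\<kappa> * r) \<Longrightarrow>
           \<kappa> * norm (\<phi> v - \<phi> w) \<le> norm (v - w)"
    and "\<phi> (f z) = z"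
proof -
  define \<phi> where "\<phi> v = (SOME w. w \<in> ball z r \<and> f w = v)" for v
  have \<phi>: "\<phi> v \<in> ball z r \<and> f (\<phi> v) = v" if "v \<in> ball (f z) (\<kappa> * r)" for v
    using ball_subset_image_if_expanding[OF contf k r exp] that unfolding \<phi>_def
    by (smt (verit) image_iff someI subsetD)
  show thesis
  proof (rule that)
    show "\<kappa> * norm (\<phi> v - \<phi> w) \<le> norm (v - w)"
      if "v \<in> ball (f z) (\<kappa> * r)" "w \<in> ball (f z) (\<kappa> * r)" for v w
      using expanding_onD[OF exp, of "\<phi> v" "\<phi> w"] \<phi>[OF that(1)] \<phi>[OF that(2)] by simp
    show "\<phi> (f z) = z"
      using \<phi>[of "f z"] k r expanding_on_eqD[OF exp k, of "\<phi> (f z)" z] by auto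
  qed (use \<phi> in blast)
qed

text \<open>The displacement bound keeps every lift inside a fixed compact ball, where the expansion
  of \<open>f\<close> holds with a uniform radius.\<close>

definition segment_lift :: "('a::real_normed_vector \<Rightarrow> 'a) \<Rightarrow> real \<Rightarrow> 'a \<Rightarrow> 'a \<Rightarrow> real \<Rightarrow> (real \<Rightarrow> 'a) \<Rightarrow> bool" where
  "segment_lift f \<kappa> x0 u T l \<longleftrightarrow> continuous_on {0..T} l \<and> l 0 = x0 \<and>
     (\<forall>t\<in>{0..T}. f (l t) = f x0 + t *\<^sub>R (u - f x0) \<and> norm (l t - x0) \<le> t * (norm (u - f x0) / \<kappa>))"

lemma segment_lift_extend:
  fixes f :: "'a::euclidean_space \<Rightarrow> 'a"
  assumes contf: "continuous_on UNIV f" and k: "\<kappa> > 0"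
    and lf: "segment_lift f \<kappa> x0 u T l" and T: "0 \<le> T" "T \<le> T'"
    and r: "r > 0" and exp: "expanding_on (cball (l T) r) f \<kappa>"
    and step: "(T' - T) * norm (u - f x0) < \<kappa> * r"
  shows "\<exists>l'. segment_lift f \<kappa> x0 u T' l'"
proof -
  define g where "g t = f x0 + t *\<^sub>R (u - f x0)" for t
  define M where "M = norm (u - f x0) / \<kappa>"
  define z where "z = l T"
  have g_dist: "norm (g t - g s) = \<bar>t - s\<bar> * norm (u - f x0)" for t s
    unfolding g_def by (simp add: scaleR_diff_left[symmetric])
  have fz: "f z = g T" using lf T unfolding segment_lift_def z_def g_def by auto
  obtain \<phi> where \<phi>: "\<And>v. v \<in> ball (f z) (\<kappa> * r) \<Longrightarrow> \<phi> v \<in> ball z r \<and> f (\<phi> v) = v"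
    and \<phi>_lip: "\<And>v w. v \<in> ball (f z) (\<kappa> * r) \<Longrightarrow> w \<in> ball (f z) (\<kappa> * r) \<Longrightarrow>
           \<kappa> * norm (\<phi> v - \<phi> w) \<le> norm (v - w)"
    and "\<phi> (f z) = z"
    using expanding_local_inverse[OF contf k r exp] unfolding z_def by blast
  then have \<phi>_start: "\<phi> (g T) = z" using fz by simp
  have g_near: "g t \<in> ball (f z) (\<kappa> * r)" if "t \<in> {T..T'}" for t
  proof -
    have "norm (g t - g T) \<le> (T' - T) * norm (u - f x0)"
      using that g_dist[of t T] by (auto intro: mult_right_mono)
    then show ?thesis using fz step by (simp add: dist_norm norm_minus_commute)
  qed
  have lip: "norm (\<phi> (g t) - \<phi> (g s)) \<le> \<bar>t - s\<bar> * M" if "t \<in> {T..T'}" "s \<in> {T..T'}" for t s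
    using \<phi>_lip[OF g_near[OF that(1)] g_near[OF that(2)]] k unfolding g_dist M_def
    by (simp add: field_simps)
  define l' where "l' t = (if t \<le> T then l t else \<phi> (g t))" for t
  have "M-lipschitz_on {T..T'} (\<lambda>t. \<phi> (g t))"
  proof (rule lipschitz_onI)
    show "dist (\<phi> (g t)) (\<phi> (g s)) \<le> M * dist t s" if "t \<in> {T..T'}" "s \<in> {T..T'}" for t s
      using lip[OF that] by (simp add: dist_norm dist_real_def mult.commute)
  qed (use k in \<open>simp add: M_def\<close>)
  then have "continuous_on {T..T'} (\<lambda>t. \<phi> (g t))"
    by (rule lipschitz_on_continuous_on)
  then have cont_l': "continuous_on {0..T'} l'"
    unfolding l'_def using lf unfolding segment_lift_def
    by (intro continuous_on_cases_le[where h="\<lambda>t. t"])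
      (auto simp: \<phi>_start z_def intro: continuous_on_subset)
  have "f (l' t) = g t \<and> norm (l' t - x0) \<le> t * M" if t: "t \<in> {0..T'}" for t
  proof (cases "t \<le> T")
    case True
    then show ?thesis using lf t unfolding segment_lift_def l'_def g_def M_def by auto
  next
    case False
    then have tT: "t \<in> {T..T'}" using t by auto
    have "norm (l' t - x0) \<le> norm (\<phi> (g t) - \<phi> (g T)) + norm (z - x0)"
      using False norm_triangle_ineq[of "\<phi> (g t) - z" "z - x0"] unfolding l'_def \<phi>_start by simp
    also have "\<dots> \<le> (t - T) * M + T * M"
    proof (rule add_mono)
      show "norm (\<phi> (g t) - \<phi> (g T)) \<le> (t - T) * M" using lip[OF tT, of T] T False by simp
      show "norm (z - x0) \<le> T * M" using lf T unfolding segment_lift_def z_def M_def by auto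
    qed
    also have "\<dots> = t * M" by (simp add: algebra_simps)
    finally show ?thesis using False \<phi>[OF g_near[OF tT]] unfolding l'_def by simp
  qed
  then have "segment_lift f \<kappa> x0 u T' l'"
    using cont_l' lf T unfolding segment_lift_def l'_def g_def M_def by auto
  then show ?thesis by blast
qed

lemma segment_lift_exists:
  fixes f :: "'a::euclidean_space \<Rightarrow> 'a"
  assumes contf: "continuous_on UNIV f" and k: "\<kappa> > 0" and le: "locally_expanding f \<kappa>"
  shows "\<exists>l. segment_lift f \<kappa> x0 u 1 l"
proof -
  define N where "N = norm (u - f x0)"
  obtain \<delta> where \<delta>: "\<delta> > 0" and exp: "\<And>z. z \<in> cball x0 (N / \<kappa>) \<Longrightarrow> expanding_on (ball z \<delta>) f \<kappa>"
    using locally_expanding_uniform[OF le compact_cball] by blast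
  define r where "r = \<delta> / 2"
  define \<epsilon> where "\<epsilon> = \<kappa> * r / (N + 1)"
  have N0: "N \<ge> 0" unfolding N_def by simp
  have r: "0 < r" "cball z r \<subseteq> ball z \<delta>" for z
    unfolding r_def using \<delta> by auto
  have e0: "\<epsilon> > 0" unfolding \<epsilon>_def using k r N0 by simp
  have "\<epsilon> * N = \<kappa> * r * (N / (N + 1))" unfolding \<epsilon>_def by simp
  also have "\<dots> < \<kappa> * r * 1" using k r N0 by (intro mult_strict_left_mono) auto
  finally have eN: "\<epsilon> * N < \<kappa> * r" by simp
  have "\<exists>l. segment_lift f \<kappa> x0 u (min 1 (real n * \<epsilon>)) l" for n
  proof (induction n)
    case 0
    have "segment_lift f \<kappa> x0 u 0 (\<lambda>t. x0)" unfolding segment_lift_def by auto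
    then show ?case by auto
  next
    case (Suc n)
    define T where "T = min 1 (real n * \<epsilon>)"
    define T' where "T' = min 1 (real (Suc n) * \<epsilon>)"
    obtain l where l: "segment_lift f \<kappa> x0 u T l" using Suc.IH unfolding T_def by blast
    have T: "0 \<le> T" "T \<le> T'" "T \<le> 1" "T' - T \<le> \<epsilon>"
      unfolding T_def T'_def using e0 by (auto simp: min_def field_simps)
    have "norm (l T - x0) \<le> T * (N / \<kappa>)" using l T unfolding segment_lift_def N_def by auto
    also have "\<dots> \<le> N / \<kappa>" using T N0 k by (intro mult_left_le_one_le) auto
    finally have "l T \<in> cball x0 (N / \<kappa>)"
      by (simp add: dist_norm norm_minus_commute)
    then have "expanding_on (cball (l T) r) f \<kappa>"
      using exp r(2) expanding_on_subset by blast
    moreover have "(T' - T) * N < \<kappa> * r"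
      using mult_right_mono[OF T(4) N0] eN by linarith
    ultimately show ?case
      using segment_lift_extend[OF contf k l T(1,2) r(1)] unfolding T'_def N_def by blast
  qed
  moreover have "1 \<le> real (nat \<lceil>1 / \<epsilon>\<rceil>) * \<epsilon>"
  proof -
    have "1 / \<epsilon> \<le> real (nat \<lceil>1 / \<epsilon>\<rceil>)" by linarith
    then have "1 / \<epsilon> * \<epsilon> \<le> real (nat \<lceil>1 / \<epsilon>\<rceil>) * \<epsilon>"
      using e0 by (intro mult_right_mono) auto
    then show ?thesis using e0 by simp
  qed
  ultimately show ?thesis by (metis min.absorb1)
qed

text \<open>Lifts of nearby endpoints stay close: the set of times up to which the two lifts are within
  the uniform expansion radius is open, and there expansion gives the linear bound, whose
  sublevel set is closed; by connectedness both sets are all of \<open>[0,1]\<close>.\<close>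

lemma segment_lift_endpoint_lipschitz:
  fixes f :: "'a::euclidean_space \<Rightarrow> 'a"
  assumes k: "\<kappa> > 0" and le: "locally_expanding f \<kappa>"
    and L: "\<And>u. segment_lift f \<kappa> x0 u 1 (L u)"
  shows "\<exists>\<epsilon>>0. \<forall>u'\<in>ball u \<epsilon>. dist (L u' 1) (L u 1) \<le> (1 / \<kappa>) * dist u' u"
proof -
  define N where "N = norm (u - f x0)"
  obtain \<delta> where \<delta>: "\<delta> > 0" and exp: "\<And>z. z \<in> cball x0 (N / \<kappa>) \<Longrightarrow> expanding_on (ball z \<delta>) f \<kappa>"
    using locally_expanding_uniform[OF le compact_cball] by blast
  have on_segment: "f (L v t) = f x0 + t *\<^sub>R (v - f x0)" if "t \<in> {0..1}" for v t
    using L[of v] that unfolding segment_lift_def by blast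
  show ?thesis
  proof (intro exI[of _ "\<kappa> * \<delta>"] conjI ballI)
    show "\<kappa> * \<delta> > 0" using k \<delta> by simp
  next
    fix u' assume u': "u' \<in> ball u (\<kappa> * \<delta>)"
    define D where "D t = norm (L u t - L u' t)" for t
    have cD: "continuous_on {0..1} D"
      unfolding D_def using L[of u] L[of u'] unfolding segment_lift_def by (intro continuous_intros) auto
    define A where "A = {0..1} \<inter> D -` {..<\<delta>}"
    define B where "B = {0..1} \<inter> (\<lambda>t. \<kappa> * D t - t * norm (u - u')) -` {..0}"
    have "openin (top_of_set {0..1}) A"
      unfolding A_def by (rule continuous_openin_preimage_gen[OF cD]) auto
    moreover have "closedin (top_of_set {0..1}) B"
      unfolding B_def by (rule continuous_closedin_preimage) (auto intro!: continuous_intros cD)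
    moreover have AB: "A = B"
    proof (intro equalityI subsetI)
      fix t assume "t \<in> A"
      then have t: "t \<in> {0..1}" "D t < \<delta>" unfolding A_def by auto
      have "norm (L u t - x0) \<le> t * (N / \<kappa>)" using L[of u] t unfolding segment_lift_def N_def by auto
      also have "\<dots> \<le> N / \<kappa>" using t k unfolding N_def by (intro mult_left_le_one_le) auto
      finally have "expanding_on (ball (L u t) \<delta>) f \<kappa>"
        using exp by (simp add: dist_norm norm_minus_commute)
      then have "\<kappa> * D t \<le> norm (f (L u t) - f (L u' t))"
        using \<delta> t unfolding D_def by (intro expanding_onD) (auto simp: dist_norm)
      also have "\<dots> = t * norm (u - u')"
        using t by (simp add: on_segment scaleR_diff_right[symmetric])
      finally show "t \<in> B" unfolding B_def using t by auto
    next
      fix t assume "t \<in> B"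
      then have t: "t \<in> {0..1}" "\<kappa> * D t \<le> t * norm (u - u')" unfolding B_def by auto
      have "t * norm (u - u') \<le> norm (u - u')" using t by (simp add: mult_left_le_one_le)
      also have "\<dots> < \<kappa> * \<delta>" using u' by (simp add: dist_norm)
      finally have "\<kappa> * D t < \<kappa> * \<delta>" using t by simp
      then have "D t < \<delta>" using k by simp
      then show "t \<in> A" unfolding A_def using t by auto
    qed
    moreover have "0 \<in> A"
      unfolding A_def D_def using L[of u] L[of u'] \<delta> unfolding segment_lift_def by auto
    ultimately have "A = {0..1}" using connected_clopen[of "{0..1::real}"] by auto
    then have "1 \<in> B" using AB by simp
    then have "\<kappa> * D 1 \<le> norm (u - u')" unfolding B_def by simp
    then show "dist (L u' 1) (L u 1) \<le> (1 / \<kappa>) * dist u' u"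
      using k unfolding D_def by (simp add: dist_norm norm_minus_commute field_simps)
  qed
qed

lemma isCont_if_pointwise_lipschitz:
  fixes G :: "'a::metric_space \<Rightarrow> 'b::metric_space"
  assumes L: "L \<ge> 0" and pointwise: "\<exists>\<epsilon>>0. \<forall>u'\<in>ball u \<epsilon>. dist (G u') (G u) \<le> L * dist u' u"
  shows "isCont G u"
  unfolding continuous_at_eps_delta
proof (intro allI impI)
  fix e :: real assume e: "e > 0"
  obtain \<epsilon> where \<epsilon>: "\<epsilon> > 0" "\<forall>u'\<in>ball u \<epsilon>. dist (G u') (G u) \<le> L * dist u' u"
    using pointwise by blast
  have "dist (G u') (G u) < e" if "dist u' u < min \<epsilon> (e / (L + 1))" for u'
  proof -
    have "u' \<in> ball u \<epsilon>" using that by (simp add: dist_commute)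
    then have "dist (G u') (G u) \<le> L * dist u' u" using \<epsilon>(2) by blast
    also have "\<dots> \<le> L * (e / (L + 1))" using that L by (intro mult_left_mono) auto
    also have "\<dots> < e" using e L by (simp add: field_simps)
    finally show ?thesis .
  qed
  then show "\<exists>d>0. \<forall>u'. dist u' u < d \<longrightarrow> dist (G u') (G u) < e"
    using \<epsilon> e L by (intro exI[of _ "min \<epsilon> (e / (L + 1))"]) auto
qed

lemma lipschitz_on_UNIV_if_pointwise:
  fixes G :: "'a::real_normed_vector \<Rightarrow> 'b::metric_space"
  assumes L: "L \<ge> 0" and pointwise: "\<And>u. \<exists>\<epsilon>>0. \<forall>u'\<in>ball u \<epsilon>. dist (G u') (G u) \<le> L * dist u' u"
  shows "L-lipschitz_on UNIV G"
proof (rule lipschitz_onI[OF _ L])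
  have contG: "continuous_on UNIV G"
    using isCont_if_pointwise_lipschitz[OF L pointwise] by (simp add: continuous_at_imp_continuous_on)
  fix y1 y2 :: 'a
  define N where "N = dist y1 y2"
  define p where "p t = G (y1 + t *\<^sub>R (y2 - y1))" for t
  have "(L * N)-lipschitz_on {0..1} p"
  proof (rule locally_lipschitz_imp_lipschitz)
    show "continuous_on {0..1} p"
      unfolding p_def using contG by (rule continuous_on_compose2) (auto intro!: continuous_intros)
    show "0 \<le> L * N" using L unfolding N_def by simp
    fix x y :: real assume "x \<in> {0..<1}" "y > x"
    obtain \<epsilon> where \<epsilon>: "\<epsilon> > 0" "\<forall>u'\<in>ball (y1 + x *\<^sub>R (y2 - y1)) \<epsilon>.
        dist (G u') (G (y1 + x *\<^sub>R (y2 - y1))) \<le> L * dist u' (y1 + x *\<^sub>R (y2 - y1))"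
      using pointwise by blast
    define z where "z = min y (x + \<epsilon> / (N + 1))"
    have N0: "N \<ge> 0" unfolding N_def by simp
    have z: "x < z" "z \<le> y" unfolding z_def using \<open>y > x\<close> \<epsilon> N0 by auto
    have "(y1 + z *\<^sub>R (y2 - y1)) - (y1 + x *\<^sub>R (y2 - y1)) = (z - x) *\<^sub>R (y2 - y1)"
      by (simp add: scaleR_diff_left)
    then have dz: "dist (y1 + z *\<^sub>R (y2 - y1)) (y1 + x *\<^sub>R (y2 - y1)) = (z - x) * N"
      using z unfolding N_def dist_norm by (simp add: norm_minus_commute)
    have "(z - x) * N \<le> \<epsilon> / (N + 1) * N" unfolding z_def using N0 by (intro mult_right_mono) auto
    also have "\<dots> < \<epsilon>" using \<epsilon> N0 by (simp add: field_simps)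
    finally have "y1 + z *\<^sub>R (y2 - y1) \<in> ball (y1 + x *\<^sub>R (y2 - y1)) \<epsilon>"
      using dz by (simp add: dist_commute)
    from bspec[OF \<epsilon>(2) this] have "dist (p z) (p x) \<le> L * N * (z - x)"
      unfolding p_def dz by (simp add: mult_ac)
    then show "\<exists>z\<in>{x<..y}. dist (p z) (p x) \<le> L * N * (z - x)"
      using z by auto
  qed
  then have "dist (p 1) (p 0) \<le> L * N * dist (1::real) 0" by (rule lipschitz_onD) auto
  then show "dist (G y1) (G y2) \<le> L * dist y1 y2"
    unfolding p_def N_def by (simp add: dist_commute)
qed

text \<open>The points where \<open>G\<close> inverts \<open>f\<close> form a closed set, which is open because \<open>f\<close> is
  injective near each point and \<open>G \<circ> f\<close> is continuous; so it is everything once it is nonempty.\<close>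

lemma right_inverse_of_locally_expanding_is_left_inverse:
  fixes f G :: "'a::real_normed_vector \<Rightarrow> 'a"
  assumes contf: "continuous_on UNIV f" and contG: "continuous_on UNIV G"
    and k: "\<kappa> > 0" and le: "locally_expanding f \<kappa>"
    and right_inv: "\<And>u. f (G u) = u" and base: "G (f x0) = x0"
  shows "G (f z) = z"
proof -
  define A where "A = {z. G (f z) = z}"
  have contGf: "continuous_on UNIV (\<lambda>z. G (f z))"
    using continuous_on_compose2[OF contG contf] by simp
  have "closed A"
    unfolding A_def using contGf by (intro closed_Collect_eq continuous_on_id) auto
  moreover have "open A"
  proof (subst open_subopen, intro ballI)
    fix z assume z: "z \<in> A"
    obtain \<delta> where \<delta>: "\<delta> > 0" "expanding_on (ball z \<delta>) f \<kappa>"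
      using le unfolding locally_expanding_def by blast
    obtain d where d: "d > 0" "\<And>z'. dist z' z < d \<Longrightarrow> dist (G (f z')) (G (f z)) < \<delta>"
      using contGf \<delta>(1) unfolding continuous_on_iff by (metis UNIV_I)
    have "z' \<in> A" if z': "z' \<in> ball z (min d \<delta>)" for z'
    proof -
      have "G (f z') \<in> ball z \<delta>" "z' \<in> ball z \<delta>"
        using d(2)[of z'] z z' unfolding A_def by (auto simp: dist_commute)
      then show ?thesis
        unfolding A_def using expanding_on_eqD[OF \<delta>(2) k] right_inv by blast
    qed
    then show "\<exists>T. open T \<and> z \<in> T \<and> T \<subseteq> A"
      using d(1) \<delta>(1) by (intro exI[of _ "ball z (min d \<delta>)"]) auto
  qed
  moreover have "x0 \<in> A" unfolding A_def using base by simp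
  ultimately have "A = UNIV" using clopen by blast
  then show ?thesis unfolding A_def by auto
qed

text \<open>The inverse is obtained by lifting the segment from \<open>f 0\<close> to \<open>u\<close> through \<open>f\<close>.\<close>

theorem locally_expanding_bij_lipschitz_inv:
  fixes f :: "'a::euclidean_space \<Rightarrow> 'a"
  assumes contf: "continuous_on UNIV f" and k: "\<kappa> > 0" and le: "locally_expanding f \<kappa>"
  shows "bij f" and "(1 / \<kappa>)-lipschitz_on UNIV (inv f)"
proof -
  define L where "L u = (SOME l. segment_lift f \<kappa> 0 u 1 l)" for u
  have L: "segment_lift f \<kappa> 0 u 1 (L u)" for u
    unfolding L_def using segment_lift_exists[OF contf k le] by (rule someI_ex)
  define G where "G u = L u 1" for u
  have right_inv: "f (G u) = u" for u
    using L[of u] unfolding segment_lift_def G_def by auto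
  have lipG: "(1 / \<kappa>)-lipschitz_on UNIV G"
    using k segment_lift_endpoint_lipschitz[OF k le L] unfolding G_def
    by (intro lipschitz_on_UNIV_if_pointwise) auto
  have "G (f 0) = 0"
    using L[of "f 0"] unfolding segment_lift_def G_def by auto
  then have left_inv: "G (f z) = z" for z
    using right_inverse_of_locally_expanding_is_left_inverse[OF contf
        lipschitz_on_continuous_on[OF lipG] k le right_inv] by blast
  have "inv f = G"
    using left_inv right_inv by (intro inv_equality ext) auto
  then show "bij f" "(1 / \<kappa>)-lipschitz_on UNIV (inv f)"
    using left_inv right_inv lipG by (auto intro!: o_bij[of G])
qed

section \<open>Local expansion from the star-coquasiderivative\<close>

lemma sublinear_0: "sublinear p \<Longrightarrow> p 0 = 0"
  unfolding sublinear_def by (metis mult_2 one_add_one scaleR_zero_right zero_less_numeral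
      add_cancel_left_left mult.commute)

lemma star_diff_subdiff_memI:
  assumes p: "sublinear p" and q: "sublinear q" and le: "\<And>v. s \<bullet> v \<le> p v - q v"
  shows "s \<in> star_diff (subdiff p 0) (subdiff q 0)"
proof -
  have "s + b \<in> subdiff p 0" if "b \<in> subdiff q 0" for b
  proof -
    have "b \<bullet> y \<le> q y" for y using that sublinear_0[OF q] unfolding subdiff_def by force
    then show ?thesis using le sublinear_0[OF p] unfolding subdiff_def
      by (simp add: inner_add_left) (smt (verit))
  qed
  then show ?thesis unfolding star_diff_def by blast
qed

lemma norm_add_le_quadratic:
  fixes z d :: "'a::real_inner"
  assumes "z \<noteq> 0"
  shows "norm (z + d) \<le> norm z + sgn z \<bullet> d + (norm d)\<^sup>2 / (2 * norm z)"
proof -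
  define n where "n = norm z"
  have n: "n > 0" using assms unfolding n_def by simp
  have "2 * n * norm (z + d) \<le> (norm (z + d))\<^sup>2 + n\<^sup>2"
    using sum_squares_bound[of n "norm (z + d)"] by (simp add: power2_eq_square mult.commute)
  also have "\<dots> = 2 * n\<^sup>2 + 2 * (z \<bullet> d) + (norm d)\<^sup>2"
    unfolding n_def by (simp add: power2_norm_eq_inner inner_add_left inner_add_right inner_commute)
  finally have "norm (z + d) \<le> (2 * n\<^sup>2 + 2 * (z \<bullet> d) + (norm d)\<^sup>2) / (2 * n)"
    using n by (simp add: field_simps)
  also have "\<dots> = n + sgn z \<bullet> d + (norm d)\<^sup>2 / (2 * n)"
    using n by (simp add: sgn_div_norm n_def[symmetric] field_simps power2_eq_square)
  finally show ?thesis unfolding n_def .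
qed

lemma norm_Pair_directional_limit:
  fixes y a v :: "'a::euclidean_space" and \<eta> :: real
  assumes eta: "\<eta> > 0"
  shows "((\<lambda>t. (norm (y + t *\<^sub>R v - a, \<eta>) - norm (y - a, \<eta>)) / t)
          \<longlongrightarrow> ((y - a) \<bullet> v) / norm (y - a, \<eta>)) (at_right 0)"
proof -
  define P where "P = (y - a, \<eta>)"
  have "P \<noteq> 0" unfolding P_def using eta by (simp add: zero_prod_def)
  then have norm_deriv: "(norm has_derivative (\<lambda>x. x \<bullet> sgn P)) (at (y + 0 *\<^sub>R v - a, \<eta>))"
    using has_derivative_norm unfolding P_def by simp
  have "((\<lambda>t. (y + t *\<^sub>R v - a, \<eta>)) has_derivative (\<lambda>t. (t *\<^sub>R v, 0))) (at 0)"
    by (auto intro!: derivative_eq_intros)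
  from has_derivative_compose[OF this norm_deriv]
  have "((\<lambda>t. norm (y + t *\<^sub>R v - a, \<eta>)) has_derivative (\<lambda>t. (t *\<^sub>R v, 0) \<bullet> sgn P)) (at 0)"
    by (simp add: o_def)
  moreover have "(t *\<^sub>R v, 0::real) \<bullet> sgn P = t * ((v, 0) \<bullet> sgn P)" for t
  proof -
    have "(t *\<^sub>R v, 0::real) = t *\<^sub>R (v, 0)" by simp
    then show ?thesis by (simp only: inner_scaleR_left)
  qed
  ultimately have "((\<lambda>t. norm (y + t *\<^sub>R v - a, \<eta>)) has_field_derivative (v, 0) \<bullet> sgn P) (at 0)"
    unfolding has_field_derivative_def by (simp add: mult.commute[of _ "(v, 0) \<bullet> sgn P"])
  then have "((\<lambda>t. (norm (y + t *\<^sub>R v - a, \<eta>) - norm (y - a, \<eta>)) / t) \<longlongrightarrow> (v, 0) \<bullet> sgn P) (at 0)"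
    unfolding has_field_derivative_iff by simp
  then have "((\<lambda>t. (norm (y + t *\<^sub>R v - a, \<eta>) - norm (y - a, \<eta>)) / t) \<longlongrightarrow> (v, 0) \<bullet> sgn P) (at_right 0)"
    by (rule tendsto_mono[rotated]) (rule at_le, simp)
  moreover have "(v, 0) \<bullet> sgn P = ((y - a) \<bullet> v) / norm (y - a, \<eta>)"
    unfolding P_def sgn_div_norm by (simp add: inner_commute divide_inverse)
  ultimately show ?thesis by simp
qed

lemma scalarly_qd_difference_quotient_convergent:
  fixes h :: "'a::euclidean_space \<Rightarrow> 'b::euclidean_space"
  assumes "scalarly_qd h y"
  shows "\<exists>D. ((\<lambda>t. (1 / t) *\<^sub>R (h (y + t *\<^sub>R v) - h y)) \<longlongrightarrow> D) (at_right 0)"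
proof -
  have "\<exists>l. ((\<lambda>t. (i \<bullet> h (y + t *\<^sub>R v) - i \<bullet> h y) / t) \<longlongrightarrow> l) (at_right 0)" for i
    using assms unfolding scalarly_qd_def qd_pair_def by blast
  then obtain l where l: "\<And>i. ((\<lambda>t. (i \<bullet> h (y + t *\<^sub>R v) - i \<bullet> h y) / t) \<longlongrightarrow> l i) (at_right 0)"
    by metis
  have "(\<lambda>t. (1 / t) *\<^sub>R (h (y + t *\<^sub>R v) - h y))
      = (\<lambda>t. \<Sum>i\<in>Basis. ((i \<bullet> h (y + t *\<^sub>R v) - i \<bullet> h y) / t) *\<^sub>R i)"
    by (subst euclidean_representation[symmetric], intro ext sum.cong refl)
      (simp add: inner_diff_left inner_diff_right inner_commute divide_inverse mult.commute)
  moreover have "((\<lambda>t. \<Sum>i\<in>Basis. ((i \<bullet> h (y + t *\<^sub>R v) - i \<bullet> h y) / t) *\<^sub>R i)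
      \<longlongrightarrow> (\<Sum>i\<in>Basis. l i *\<^sub>R i)) (at_right 0)"
    by (intro tendsto_intros l)
  ultimately show ?thesis by auto
qed

text \<open>Expanding the norm to second order around \<open>h y - u\<close>, the first term contributes the
  directional derivative of \<open>\<lambda>z. sgn (h y - u) \<bullet> h z\<close> plus a remainder that vanishes because
  the difference quotients of \<open>h\<close> converge.\<close>

lemma penalized_minimizer_first_order:
  fixes h :: "'a::euclidean_space \<Rightarrow> 'b::euclidean_space" and \<eta> c :: real
  assumes qd: "scalarly_qd h y" and pq: "qd_pair h y (sgn (h y - u)) p q"
    and ne: "h y \<noteq> u" and eta: "\<eta> > 0"
    and min: "\<forall>\<^sub>F t in at_right 0. norm (h y - u) + c * norm (y - a, \<eta>)
                 \<le> norm (h (y + t *\<^sub>R v) - u) + c * norm (y + t *\<^sub>R v - a, \<eta>)"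
  shows "- (c / norm (y - a, \<eta>)) * ((y - a) \<bullet> v) \<le> p v - q v"
proof -
  define z where "z = h y - u"
  define n where "n = norm z"
  define N where "N = norm (y - a, \<eta>)"
  define d where "d t = h (y + t *\<^sub>R v) - h y" for t
  have n: "n > 0" using ne unfolding n_def z_def by simp
  obtain D where D: "((\<lambda>t. (1 / t) *\<^sub>R d t) \<longlongrightarrow> D) (at_right 0)"
    using scalarly_qd_difference_quotient_convergent[OF qd] unfolding d_def by blast
  have "((\<lambda>t. sgn z \<bullet> d t / t) \<longlongrightarrow> p v - q v) (at_right 0)"
    using pq unfolding qd_pair_def d_def z_def by (simp add: inner_diff_right)
  moreover have "((\<lambda>t. t * (norm ((1 / t) *\<^sub>R d t))\<^sup>2 / (2 * n)) \<longlongrightarrow> 0 * (norm D)\<^sup>2 / (2 * n)) (at_right 0)"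
    using n by (intro tendsto_intros D) auto
  moreover have "((\<lambda>t. c * ((norm (y + t *\<^sub>R v - a, \<eta>) - N) / t)) \<longlongrightarrow> c * (((y - a) \<bullet> v) / N)) (at_right 0)"
    unfolding N_def by (intro tendsto_intros norm_Pair_directional_limit eta)
  ultimately have lim: "((\<lambda>t. sgn z \<bullet> d t / t + t * (norm ((1 / t) *\<^sub>R d t))\<^sup>2 / (2 * n)
              + c * ((norm (y + t *\<^sub>R v - a, \<eta>) - N) / t))
          \<longlongrightarrow> (p v - q v) + 0 * (norm D)\<^sup>2 / (2 * n) + c * (((y - a) \<bullet> v) / N)) (at_right 0)"
    by (intro tendsto_add)
  have "\<forall>\<^sub>F t in at_right 0. 0 \<le> sgn z \<bullet> d t / t + t * (norm ((1 / t) *\<^sub>R d t))\<^sup>2 / (2 * n)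
              + c * ((norm (y + t *\<^sub>R v - a, \<eta>) - N) / t)"
    using min eventually_at_right_less[of 0]
  proof eventually_elim
    case (elim t)
    have "0 \<le> sgn z \<bullet> d t + (norm (d t))\<^sup>2 / (2 * n) + c * (norm (y + t *\<^sub>R v - a, \<eta>) - N)"
      using norm_add_le_quadratic[of z "d t"] elim ne unfolding z_def n_def N_def d_def
      by (simp add: algebra_simps)
    then have "0 \<le> (sgn z \<bullet> d t + (norm (d t))\<^sup>2 / (2 * n) + c * (norm (y + t *\<^sub>R v - a, \<eta>) - N)) / t"
      using elim by simp
    also have "\<dots> = sgn z \<bullet> d t / t + t * (norm ((1 / t) *\<^sub>R d t))\<^sup>2 / (2 * n)
              + c * ((norm (y + t *\<^sub>R v - a, \<eta>) - N) / t)"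
      using elim n by (simp add: field_simps power2_eq_square)
    finally show ?case .
  qed
  then have "0 \<le> (p v - q v) + 0 * (norm D)\<^sup>2 / (2 * n) + c * (((y - a) \<bullet> v) / N)"
    by (rule tendsto_lowerbound[OF lim]) simp
  then show ?thesis unfolding N_def by simp
qed

lemma star_coqd_small_at_penalized_minimizer:
  fixes h :: "'a::euclidean_space \<Rightarrow> 'b::euclidean_space" and \<eta> c :: real
  assumes qd: "scalarly_qd h y" and ne: "h y \<noteq> u" and eta: "\<eta> > 0" and c: "c > 0"
    and min: "\<And>v. \<forall>\<^sub>F t in at_right 0. norm (h y - u) + c * norm (y - a, \<eta>)
                 \<le> norm (h (y + t *\<^sub>R v) - u) + c * norm (y + t *\<^sub>R v - a, \<eta>)"
  shows "\<exists>s\<in>star_coqd_set h y (sphere 0 1). norm s < c"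
proof -
  define w where "w = sgn (h y - u)"
  define PQ where "PQ = (SOME pq. qd_pair h y w (fst pq) (snd pq))"
  have "qd_pair h y w (fst PQ) (snd PQ)"
    using qd unfolding PQ_def scalarly_qd_def by (metis (mono_tags, lifting) fst_conv snd_conv someI)
  then have pq: "sublinear (fst PQ)" "sublinear (snd PQ)" "qd_pair h y w (fst PQ) (snd PQ)"
    unfolding qd_pair_def by auto
  define N where "N = norm (y - a, \<eta>)"
  have "sqrt ((norm (y - a))\<^sup>2) < sqrt ((norm (y - a))\<^sup>2 + \<eta>\<^sup>2)"
    using eta by (intro real_sqrt_less_mono) simp
  then have NN: "norm (y - a) < N"
    unfolding N_def norm_Pair by simp
  define s where "s = - (c / N) *\<^sub>R (y - a)"
  have N0: "N > 0" using NN norm_ge_zero[of "y - a"] by linarith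
  have "norm s = c * (norm (y - a) / N)" unfolding s_def using c N0 by simp
  also have "\<dots> < c" using NN N0 c by (simp add: mult_less_cancel_left1 divide_less_eq)
  finally have "norm s < c" .
  moreover have "s \<bullet> v \<le> fst PQ v - snd PQ v" for v
    using penalized_minimizer_first_order[OF qd pq(3)[unfolded w_def] ne eta min] unfolding s_def N_def by simp
  then have "s \<in> star_coqd h y w"
    unfolding star_coqd_def Let_def PQ_def[symmetric] by (rule star_diff_subdiff_memI[OF pq(1,2)])
  moreover have "w \<in> sphere 0 1" unfolding w_def using ne by (simp add: norm_sgn)
  ultimately show ?thesis unfolding star_coqd_set_def by blast
qed

text \<open>A minimizer \<open>y\<close> of \<open>z \<mapsto> norm (h z - u) + c * norm (z - a, \<eta>)\<close> over a ball lies in its interior,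
  and if \<open>h y \<noteq> u\<close> the first-order condition would put an element of norm \<open>< c\<close> into
  \<open>star_coqd_set h y (sphere 0 1)\<close>. The penalty uses \<open>norm (z - a, \<eta>)\<close> instead of \<open>norm (z - a)\<close>
  to be differentiable.\<close>

lemma preimage_near_by_penalized_minimization:
  fixes h :: "'a::euclidean_space \<Rightarrow> 'b::euclidean_space"
  assumes contH: "continuous_on UNIV h" and c: "c > 0" and R: "R > 0"
    and qd: "\<And>y. norm y < R \<Longrightarrow> scalarly_qd h y"
    and coqd: "\<And>y. norm y < R \<Longrightarrow> star_coqd_set h y (sphere 0 1) \<subseteq> {s. c < norm s}"
    and a: "norm a < R / 4" and u: "norm (h a - u) < c * R / 4" and eta: "0 < \<eta>" "\<eta> < R / 8"
  obtains y where "norm y < R" "h y = u" "norm (y - a) \<le> norm (h a - u) / c + \<eta>"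
proof -
  define \<psi> where "\<psi> z = norm (h z - u) + c * norm (z - a, \<eta>)" for z
  have "continuous_on (cball a (R / 2)) \<psi>"
    unfolding \<psi>_def by (intro continuous_intros continuous_on_subset[OF contH]) auto
  moreover have "cball a (R / 2) \<noteq> {}" using R by simp
  ultimately obtain y where ymin: "\<And>z. z \<in> cball a (R / 2) \<Longrightarrow> \<psi> y \<le> \<psi> z"
    using continuous_attains_inf[OF compact_cball] by blast
  have "c * norm (y - a) \<le> c * norm (y - a, \<eta>)"
    using c by (simp add: norm_Pair real_le_rsqrt)
  also have "\<dots> \<le> \<psi> y" unfolding \<psi>_def by simp
  also have "\<dots> \<le> \<psi> a" using ymin R by simp
  also have "\<dots> = norm (h a - u) + c * \<eta>" unfolding \<psi>_def using eta by (simp add: norm_Pair)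
  finally have ya: "norm (y - a) \<le> norm (h a - u) / c + \<eta>" using c by (simp add: field_simps)
  moreover have "norm (h a - u) / c < R / 4" using u c by (simp add: field_simps)
  ultimately have "norm (y - a) < 3 * R / 8" using eta by simp
  then have y_in: "y \<in> ball a (R / 2)" and ny: "norm y < R"
    using a R norm_triangle_ineq[of "y - a" a] by (auto simp: dist_norm norm_minus_commute)
  have "h y = u"
  proof (rule ccontr)
    assume ne: "h y \<noteq> u"
    have "\<forall>\<^sub>F t in at_right 0. \<psi> y \<le> \<psi> (y + t *\<^sub>R v)" for v
    proof -
      have "((\<lambda>t. y + t *\<^sub>R v) \<longlongrightarrow> y + 0 *\<^sub>R v) (at_right 0)" by (intro tendsto_intros)
      then have "\<forall>\<^sub>F t in at_right 0. y + t *\<^sub>R v \<in> ball a (R / 2)"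
        using y_in by (intro topological_tendstoD) auto
      then show ?thesis by eventually_elim (use ymin in auto)
    qed
    then obtain s where "s \<in> star_coqd_set h y (sphere 0 1)" "norm s < c"
      using star_coqd_small_at_penalized_minimizer[OF qd[OF ny] ne eta(1) c] unfolding \<psi>_def by blast
    then show False using coqd[OF ny] by fastforce
  qed
  then show thesis using that ny ya by blast
qed

lemma expanding_near_0:
  fixes h :: "'a::euclidean_space \<Rightarrow> 'b::euclidean_space"
  assumes contH: "continuous_on UNIV h" and c: "c > 0" and R: "R > 0"
    and qd: "\<And>y. norm y < R \<Longrightarrow> scalarly_qd h y"
    and coqd: "\<And>y. norm y < R \<Longrightarrow> star_coqd_set h y (sphere 0 1) \<subseteq> {s. c < norm s}"
    and inj: "\<And>y1 y2. norm y1 < R \<Longrightarrow> norm y2 < R \<Longrightarrow> h y1 = h y2 \<Longrightarrow> y1 = y2"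
  obtains \<rho> where "\<rho> > 0" "expanding_on (ball 0 \<rho>) h c"
proof -
  obtain \<rho>0 where \<rho>0: "\<rho>0 > 0" "\<And>z. dist z 0 < \<rho>0 \<Longrightarrow> dist (h z) (h 0) < c * R / 8"
    using continuous_on_iff[THEN iffD1, OF contH, rule_format, of 0 "c * R / 8"] c R by auto
  define \<rho> where "\<rho> = min \<rho>0 (R / 4)"
  have expand: "c * norm (a - b) \<le> norm (h a - h b)" if a: "a \<in> ball 0 \<rho>" and b: "b \<in> ball 0 \<rho>" for a b
  proof -
    have na: "norm a < R / 4" "norm a < \<rho>0" and nb: "norm b < R / 4" "norm b < \<rho>0"
      using a b unfolding \<rho>_def by auto
    have "norm (h a - h 0) < c * R / 8" "norm (h b - h 0) < c * R / 8"
      using \<rho>0(2)[of a] \<rho>0(2)[of b] na nb by (auto simp: dist_norm)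
    then have hab: "norm (h a - h b) < c * R / 4"
      using norm_triangle_ineq4[of "h a - h 0" "h b - h 0"] by simp
    have close: "norm (b - a) \<le> norm (h a - h b) / c + \<eta>" if eta: "0 < \<eta>" "\<eta> < R / 8" for \<eta>
    proof -
      obtain y where "norm y < R" "h y = h b" "norm (y - a) \<le> norm (h a - h b) / c + \<eta>"
        using preimage_near_by_penalized_minimization[OF contH c R qd coqd na(1) hab eta] by blast
      moreover have "y = b" using inj calculation(1,2) nb R by simp
      ultimately show ?thesis by simp
    qed
    have "norm (b - a) \<le> norm (h a - h b) / c"
    proof (rule field_le_epsilon)
      fix e :: real assume "e > 0"
      then have "norm (b - a) \<le> norm (h a - h b) / c + min e (R / 16)"
        using R by (intro close) auto
      then show "norm (b - a) \<le> norm (h a - h b) / c + e"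
        using min.cobounded1[of e "R / 16"] by linarith
    qed
    then show ?thesis using c by (simp add: field_simps norm_minus_commute)
  qed
  show thesis
  proof (rule that)
    show "\<rho> > 0" unfolding \<rho>_def using \<rho>0(1) R by simp
    show "expanding_on (ball 0 \<rho>) h c" unfolding expanding_on_def using expand by blast
  qed
qed

lemma DCH_scalarizations_imp_continuous:
  fixes g :: "'a::euclidean_space \<Rightarrow> 'b::euclidean_space"
  assumes "\<forall>w. (\<lambda>v. w \<bullet> g v) \<in> DCH"
  shows "continuous_on UNIV g"
proof -
  have ci: "continuous_on UNIV (\<lambda>v. i \<bullet> g v)" for i
  proof -
    obtain p q where pq: "sublinear p" "sublinear q" "(\<lambda>v. i \<bullet> g v) = (\<lambda>v. p v - q v)"
      using assms unfolding DCH_def by blast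
    have "continuous_on UNIV p" "continuous_on UNIV q"
      using pq(1,2) unfolding sublinear_def by (auto intro: convex_on_continuous)
    then show ?thesis unfolding pq(3) by (intro continuous_intros)
  qed
  have "continuous_on UNIV (\<lambda>v. \<Sum>i\<in>Basis. (i \<bullet> g v) *\<^sub>R i)"
    by (intro continuous_intros ci)
  moreover have "(\<lambda>v. \<Sum>i\<in>Basis. (i \<bullet> g v) *\<^sub>R i) = g"
  proof
    show "(\<Sum>i\<in>Basis. (i \<bullet> g v) *\<^sub>R i) = g v" for v
      using euclidean_representation[of "g v"] by (simp add: inner_commute)
  qed
  ultimately show ?thesis by metis
qed

lemma expanding_near_0_if_condC:
  fixes g :: "'a::euclidean_space \<Rightarrow> 'b::euclidean_space"
  assumes contg: "continuous_on UNIV g" and cC: "condC g 0" and minj: "metrically_injective g 0"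
    and c: "0 < c" "ereal c < dist0 (star_coqd_set g 0 (sphere 0 1))"
  obtains \<rho> where "\<rho> > 0" "expanding_on (ball 0 \<rho>) g c"
proof -
  have "star_coqd_set g 0 (sphere 0 1) \<subseteq> {s. c < norm s}"
  proof
    fix s assume s: "s \<in> star_coqd_set g 0 (sphere 0 1)"
    then have "star_coqd_set g 0 (sphere 0 1) \<noteq> {}" by blast
    then have "ereal c < ereal (infdist 0 (star_coqd_set g 0 (sphere 0 1)))"
      using c(2) unfolding dist0_def by simp
    also have "\<dots> \<le> ereal (norm s)" using infdist_le[OF s, of 0] by simp
    finally show "s \<in> {s. c < norm s}" by simp
  qed
  moreover have "open {s::'a. c < norm s}" by (rule open_Collect_less) (auto intro: continuous_intros)
  ultimately obtain \<delta>2 where \<delta>2: "\<delta>2 > 0"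
    "\<forall>y. norm (y - 0) \<le> \<delta>2 \<longrightarrow> star_coqd_set g y (sphere 0 1) \<subseteq> {s. c < norm s}"
    using cC unfolding condC_def by blast
  obtain \<delta>1 where \<delta>1: "\<delta>1 > 0" "\<And>y. y \<in> ball 0 \<delta>1 \<Longrightarrow> scalarly_qd g y"
    using cC unfolding condC_def by blast
  obtain \<beta> \<delta>3 where \<delta>3: "\<beta> > 0" "\<delta>3 > 0"
    "\<And>x1 x2. dist x1 0 \<le> \<delta>3 \<Longrightarrow> dist x2 0 \<le> \<delta>3 \<Longrightarrow> \<beta> * norm (x1 - x2) \<le> norm (g x1 - g x2)"
    using minj unfolding metrically_injective_def metric_inj_consts_def by blast
  define R where "R = min \<delta>1 (min \<delta>2 \<delta>3)"
  show thesis
  proof (rule expanding_near_0[OF contg c(1)])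
    show "R > 0" unfolding R_def using \<delta>1 \<delta>2 \<delta>3 by simp
    show "scalarly_qd g y" if "norm y < R" for y using \<delta>1 that unfolding R_def by auto
    show "star_coqd_set g y (sphere 0 1) \<subseteq> {s. c < norm s}" if "norm y < R" for y
      using \<delta>2 that unfolding R_def by auto
    show "y1 = y2" if "norm y1 < R" "norm y2 < R" "g y1 = g y2" for y1 y2
      using \<delta>3(3)[of y1 y2] \<delta>3(1) that unfolding R_def by (simp add: mult_le_0_iff)
  qed (use that in blast)
qed

section \<open>Expansion from strict estimators\<close>

lemma lip_lessE:
  assumes "lip g x < ereal l"
  obtains \<delta> where "\<delta> > 0" "\<And>x1 x2. x1 \<in> ball x \<delta> \<Longrightarrow> x2 \<in> ball x \<delta> \<Longrightarrow> norm (g x1 - g x2) \<le> l * norm (x1 - x2)"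
proof -
  obtain l' \<delta> where "l' < l" "\<delta> > 0" "\<forall>x1\<in>ball x \<delta>. \<forall>x2\<in>ball x \<delta>. norm (g x1 - g x2) \<le> l' * norm (x1 - x2)"
    using assms unfolding lip_def Inf_less_iff by auto
  note l' = this
  show thesis
  proof (rule that[OF l'(2)])
    fix x1 x2 assume "x1 \<in> ball x \<delta>" "x2 \<in> ball x \<delta>"
    then have "norm (g x1 - g x2) \<le> l' * norm (x1 - x2)" using l'(3) by blast
    also have "\<dots> \<le> l * norm (x1 - x2)" using l'(1) by (intro mult_right_mono) auto
    finally show "norm (g x1 - g x2) \<le> l * norm (x1 - x2)" .
  qed
qed

lemma expanding_near_if_strict_estimator:
  assumes est: "strict_estimator g f x \<mu>" and exp: "expanding_on (ball x \<rho>) g c" and "\<rho> > 0"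
    and "\<kappa> + \<mu> < c"
  obtains \<delta> where "\<delta> > 0" "expanding_on (ball x \<delta>) f \<kappa>"
proof -
  have "ereal \<mu> < ereal (c - \<kappa>)" using \<open>\<kappa> + \<mu> < c\<close> by simp
  then have lip_bound: "lip (\<lambda>t. f t - g t) x < ereal (c - \<kappa>)"
    using est unfolding strict_estimator_def by (blast intro: le_less_trans)
  obtain \<delta> where \<delta>: "\<delta> > 0"
    "\<And>s t. s \<in> ball x \<delta> \<Longrightarrow> t \<in> ball x \<delta> \<Longrightarrow> norm ((f s - g s) - (f t - g t)) \<le> (c - \<kappa>) * norm (s - t)"
    using lip_lessE[OF lip_bound] by blast
  have expand: "\<kappa> * norm (s - t) \<le> norm (f s - f t)" if "s \<in> ball x (min \<delta> \<rho>)" "t \<in> ball x (min \<delta> \<rho>)" for s t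
  proof -
    have "c * norm (s - t) \<le> norm (g s - g t)" using expanding_onD[OF exp] that by simp
    also have "\<dots> \<le> norm (f s - f t) + norm ((f s - g s) - (f t - g t))"
      by (rule order_trans[OF _ norm_triangle_ineq4]) (simp add: algebra_simps)
    also have "\<dots> \<le> norm (f s - f t) + (c - \<kappa>) * norm (s - t)" using \<delta>(2) that by simp
    finally show ?thesis by (simp add: algebra_simps)
  qed
  show thesis
    using that[of "min \<delta> \<rho>"] \<delta>(1) \<open>\<rho> > 0\<close> expand unfolding expanding_on_def by auto
qed

lemma locally_expanding_if_estimators:
  fixes f :: "'a::euclidean_space \<Rightarrow> 'a" and h :: "'a \<Rightarrow> 'a \<Rightarrow> 'a"
  assumes est: "\<forall>x. strict_estimator (\<lambda>t. f x + h x (t - x)) f x \<mu>"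
    and dch: "\<forall>x w. (\<lambda>v. w \<bullet> h x v) \<in> DCH" and cC: "\<forall>x. condC (h x) 0"
    and minj: "\<forall>x. metrically_injective (h x) 0"
    and k: "\<kappa> > 0" and mu: "\<mu> \<ge> 0"
    and flat: "ereal (\<kappa> + \<mu>) < (INF x. dist0 (star_coqd_set (h x) 0 (sphere 0 1)))"
  shows "locally_expanding f \<kappa>"
  unfolding locally_expanding_def
proof
  fix x
  obtain c where "ereal (\<kappa> + \<mu>) < ereal c" "ereal c < (INF x. dist0 (star_coqd_set (h x) 0 (sphere 0 1)))"
    using ereal_dense2[OF flat] by blast
  moreover have "(INF x. dist0 (star_coqd_set (h x) 0 (sphere 0 1))) \<le> dist0 (star_coqd_set (h x) 0 (sphere 0 1))"
    by (rule INF_lower) simp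
  ultimately have c: "\<kappa> + \<mu> < c" "ereal c < dist0 (star_coqd_set (h x) 0 (sphere 0 1))"
    by auto
  obtain \<rho> where \<rho>: "\<rho> > 0" "expanding_on (ball 0 \<rho>) (h x) c"
    using expanding_near_0_if_condC[OF DCH_scalarizations_imp_continuous cC[rule_format] minj[rule_format]
        _ c(2)] dch k mu c(1) by auto
  have "expanding_on (ball x \<rho>) (\<lambda>t. f x + h x (t - x)) c"
    unfolding expanding_on_def
  proof (intro ballI)
    fix s t assume "s \<in> ball x \<rho>" "t \<in> ball x \<rho>"
    then have "s - x \<in> ball 0 \<rho>" "t - x \<in> ball 0 \<rho>" by (auto simp: dist_norm norm_minus_commute)
    from expanding_onD[OF \<rho>(2) this]
    show "c * norm (s - t) \<le> norm ((f x + h x (s - x)) - (f x + h x (t - x)))" by simp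
  qed
  from expanding_near_if_strict_estimator[OF est[rule_format] this \<rho>(1) c(1)]
  show "\<exists>\<delta>>0. expanding_on (ball x \<delta>) f \<kappa>" by blast
qed

lemma ereal_le_inverse_mult_if_scaled_le:
  fixes B :: ereal and d D :: real
  assumes B: "B > 0" and d: "d \<ge> 0" and scaled: "\<And>\<kappa>. 0 < \<kappa> \<Longrightarrow> ereal \<kappa> < B \<Longrightarrow> \<kappa> * d \<le> D"
  shows "ereal d \<le> inverse B * ereal D"
proof (cases B)
  case (real r)
  then have r: "r > 0" using B by simp
  have "r / 2 * d \<le> D" using scaled[of "r / 2"] r real by simp
  moreover have "0 \<le> r / 2 * d" using r d by simp
  ultimately have "0 \<le> D" by linarith
  moreover have "r \<le> D / d" if "d > 0"
    using scaled real that by (intro dense_le_bounded[OF r]) (simp add: field_simps)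
  ultimately have "d * r \<le> D"
    using d r by (cases "d = 0") (simp_all add: field_simps)
  then show ?thesis using real r by (simp add: field_simps)
next
  case PInf
  have "\<not> d > 0"
  proof
    assume "d > 0"
    then have "(\<bar>D\<bar> + 1) / d * d \<le> D"
      using scaled[of "(\<bar>D\<bar> + 1) / d"] PInf by (simp add: add_pos_nonneg)
    then show False using \<open>d > 0\<close> by simp
  qed
  then show ?thesis using d PInf by simp
qed (use B in simp)

theorem mainTheorem9:
  fixes f :: "'a::euclidean_space \<Rightarrow> 'a" and h :: "'a \<Rightarrow> 'a \<Rightarrow> 'a" and \<mu> :: real
  assumes cont: "continuous_on UNIV f"
    and mu: "\<mu> \<ge> 0"
    and est: "\<forall>x. strict_estimator (\<lambda>t. f x + h x (t - x)) f x \<mu>"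
    and dch: "\<forall>x w. (\<lambda>v. w \<bullet> h x v) \<in> DCH"
    and cC: "\<forall>x. condC (h x) 0"
    and flat: "(INF x. dist0 (star_coqd_set (h x) 0 (sphere 0 1))) > ereal \<mu>"
    and minj: "\<forall>x. metrically_injective (h x) 0 \<and> inj_mod (h x) 0 > ereal \<mu>"
  shows "bij f \<and>
    (\<forall>y1 y2. ereal (norm (inv f y1 - inv f y2)) \<le>
       inverse ((INF x. dist0 (star_coqd_set (h x) 0 (sphere 0 1))) - ereal \<mu>) * ereal (norm (y1 - y2)))"
proof -
  let ?F = "INF x. dist0 (star_coqd_set (h x) 0 (sphere 0 1))"
  have inverse_bound: "bij f \<and> (\<forall>y1 y2. \<kappa> * norm (inv f y1 - inv f y2) \<le> norm (y1 - y2))"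
    if k: "\<kappa> > 0" and kF: "ereal (\<kappa> + \<mu>) < ?F" for \<kappa>
  proof -
    have "locally_expanding f \<kappa>"
      using locally_expanding_if_estimators[OF est dch cC _ k mu kF] minj by blast
    from locally_expanding_bij_lipschitz_inv[OF cont k this]
    show ?thesis using k by (auto dest!: lipschitz_onD simp: dist_norm field_simps)
  qed
  obtain c where "ereal \<mu> < ereal c" "ereal c < ?F" using ereal_dense2[OF flat] by blast
  then have "bij f" using inverse_bound[of "c - \<mu>"] by simp
  moreover have "ereal (norm (inv f y1 - inv f y2)) \<le> inverse (?F - ereal \<mu>) * ereal (norm (y1 - y2))"
    for y1 y2
  proof (rule ereal_le_inverse_mult_if_scaled_le)
    show "?F - ereal \<mu> > 0" using flat by (simp add: ereal_less_minus)
    fix \<kappa> :: real assume "0 < \<kappa>" "ereal \<kappa> < ?F - ereal \<mu>"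
    then show "\<kappa> * norm (inv f y1 - inv f y2) \<le> norm (y1 - y2)"
      using inverse_bound[of \<kappa>] by (simp add: ereal_less_minus)
  qed simp
  ultimately show ?thesis by blast
qed

end
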